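(* Let $n=2m-1$ be odd, fix $\boldsymbol{\rho}^0\in\mathcal{P}_n$ and $\alpha\in(0,\infty)$, and let $\mathbf{R}\sim\mathrm{Mallows}(\boldsymbol{\rho}^0,\alpha)$ with the footrule distance. For $i=1,\dots,n$ let $o^0_i$ be the item with $\rho^0_{o^0_i}=i$. Then the rank $R_{o^0_m}$ of the middle-ranked item is symmetrically distributed about $m$, i.e., for all $k=1,\dots,m-1$, $$P(R_{o^0_m}=m-k\mid\boldsymbol{\rho}^0,\alpha)=P(R_{o^0_m}=m+k\mid\boldsymbol{\rho}^0,\alpha).$$
   Context: $\mathcal{P}_n$ denotes the set of permutations of $\{1,\dots,n\}$; a ranking $\mathbf{r}\in\mathcal{P}_n$ assigns rank $r_i$ to item $i$. The footrule distance is $d(\mathbf{r},\boldsymbol{\rho})=\sum_{i=1}^n|r_i-\rho_i|$. The Mallows distribution $\mathrm{Mallows}(\boldsymbol{\rho}^0,\alpha)$ on $\mathcal{P}_n$ has probability mass function $P(\mathbf{R}=\mathbf{r}\mid\boldsymbol{\rho}^0,\alpha)=\frac{1}{Z_n(\alpha)}\exp\{-\frac{\alpha}{n}d(\mathbf{r},\boldsymbol{\rho}^0)\}$ with normalizing constant $Z_n(\alpha)$. *)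

theory Defs
  imports Complex_Main "HOL-Combinatorics.Permutations"
begin

text \<open>Rankings of n items: permutations of {1..n}; r i is the rank of item i.\<close>
definition rankings :: "nat \<Rightarrow> (nat \<Rightarrow> nat) set" where
  "rankings n = {r. r permutes {1..n}}"

definition footrule :: "nat \<Rightarrow> (nat \<Rightarrow> nat) \<Rightarrow> (nat \<Rightarrow> nat) \<Rightarrow> real" where
  "footrule n r \<rho> = (\<Sum>i\<in>{1..n}. \<bar>real (r i) - real (\<rho> i)\<bar>)"

definition mallows_weight :: "nat \<Rightarrow> (nat \<Rightarrow> nat) \<Rightarrow> real \<Rightarrow> (nat \<Rightarrow> nat) \<Rightarrow> real" where
  "mallows_weight n \<rho> \<alpha> r = exp (- (\<alpha> / real n) * footrule n r \<rho>)"

definition mallows_Z :: "nat \<Rightarrow> (nat \<Rightarrow> nat) \<Rightarrow> real \<Rightarrow> real" where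
  "mallows_Z n \<rho> \<alpha> = (\<Sum>r\<in>rankings n. mallows_weight n \<rho> \<alpha> r)"

definition mallows_prob :: "nat \<Rightarrow> (nat \<Rightarrow> nat) \<Rightarrow> real \<Rightarrow> ((nat \<Rightarrow> nat) \<Rightarrow> bool) \<Rightarrow> real" where
  "mallows_prob n \<rho> \<alpha> A =
     (\<Sum>r\<in>{r\<in>rankings n. A r}. mallows_weight n \<rho> \<alpha> r) / mallows_Z n \<rho> \<alpha>"

end

theory Submission
  imports Defs
begin

text \<open>Let rev j = n + 1 - j be the reversal of the rank scale, an isometry of {1..n}.
  Conjugating it by \<rho>0 gives a relabelling \<pi> of the items with \<rho>0 \<circ> \<pi> = rev \<circ> \<rho>0, so
  r \<mapsto> rev \<circ> r \<circ> \<pi> is an involution of the rankings preserving the footrule distance to \<rho>0.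
  When n = 2m - 1 the middle item is fixed by \<pi>, so the involution sends its rank j to
  n + 1 - j and exchanges the events {R = m - k} and {R = m + k} without changing any
  Mallows weight.\<close>

definition rank_reversal :: "nat \<Rightarrow> nat \<Rightarrow> nat" where
  "rank_reversal n j = (if j \<in> {1..n} then n + 1 - j else j)"

lemma rank_reversal_involution [simp]: "rank_reversal n (rank_reversal n j) = j"
  by (auto simp: rank_reversal_def)

lemma rank_reversal_permutes: "rank_reversal n permutes {1..n}"
  unfolding permutes_def
  by (metis rank_reversal_def rank_reversal_involution)

lemma footrule_reindex:
  assumes "\<pi> permutes {1..n}"
  shows "footrule n (r \<circ> \<pi>) (\<rho> \<circ> \<pi>) = footrule n r \<rho>"
  unfolding footrule_def
  using sum.permute[OF assms, of "\<lambda>i. \<bar>real (r i) - real (\<rho> i)\<bar>"] by (simp add: o_def)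

lemma footrule_rank_reversal:
  assumes "r ` {1..n} \<subseteq> {1..n}" and "\<rho> ` {1..n} \<subseteq> {1..n}"
  shows "footrule n (rank_reversal n \<circ> r) (rank_reversal n \<circ> \<rho>) = footrule n r \<rho>"
  unfolding footrule_def
proof (rule sum.cong[OF refl])
  fix i assume "i \<in> {1..n}"
  then have "r i \<in> {1..n}" "\<rho> i \<in> {1..n}" using assms by blast+
  then show "\<bar>real ((rank_reversal n \<circ> r) i) - real ((rank_reversal n \<circ> \<rho>) i)\<bar>
      = \<bar>real (r i) - real (\<rho> i)\<bar>"
    by (auto simp: rank_reversal_def of_nat_diff)
qed

lemma mallows_prob_eq_by_involution:
  assumes rankings: "\<And>r. r \<in> rankings n \<Longrightarrow> \<Phi> r \<in> rankings n"
    and involution: "\<And>r. \<Phi> (\<Phi> r) = r"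
    and weight: "\<And>r. r \<in> rankings n \<Longrightarrow> mallows_weight n \<rho> \<alpha> (\<Phi> r) = mallows_weight n \<rho> \<alpha> r"
    and events: "\<And>r. r \<in> rankings n \<Longrightarrow> B (\<Phi> r) \<longleftrightarrow> A r"
  shows "mallows_prob n \<rho> \<alpha> A = mallows_prob n \<rho> \<alpha> B"
proof -
  have "A (\<Phi> r)" if "r \<in> rankings n" "B r" for r
    using events[OF rankings[OF that(1)]] that(2) by (simp add: involution)
  then have "(\<Sum>r\<in>{r\<in>rankings n. A r}. mallows_weight n \<rho> \<alpha> r)
      = (\<Sum>r\<in>{r\<in>rankings n. B r}. mallows_weight n \<rho> \<alpha> r)"
    by (intro sum.reindex_bij_witness[where i = \<Phi> and j = \<Phi>])
      (auto simp: involution rankings weight events)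
  then show ?thesis by (simp add: mallows_prob_def)
qed

definition mallows_reflection :: "nat \<Rightarrow> (nat \<Rightarrow> nat) \<Rightarrow> (nat \<Rightarrow> nat) \<Rightarrow> nat \<Rightarrow> nat" where
  "mallows_reflection n \<rho> r = rank_reversal n \<circ> r \<circ> (inv \<rho> \<circ> rank_reversal n \<circ> \<rho>)"

lemma mallows_reflection_apply:
  "mallows_reflection n \<rho> r i = rank_reversal n (r (inv \<rho> (rank_reversal n (\<rho> i))))"
  by (simp add: mallows_reflection_def)

context
  fixes n :: nat and \<rho> :: "nat \<Rightarrow> nat"
  assumes \<rho>: "\<rho> \<in> rankings n"
begin

private lemma \<rho>_permutes: "\<rho> permutes {1..n}"
  using \<rho> by (simp add: rankings_def)

lemma mallows_reflection_rankings:
  assumes "r \<in> rankings n"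
  shows "mallows_reflection n \<rho> r \<in> rankings n"
  using assms unfolding rankings_def mallows_reflection_def mem_Collect_eq
  by (intro permutes_compose permutes_inv \<rho>_permutes rank_reversal_permutes)

lemma mallows_reflection_involution:
  "mallows_reflection n \<rho> (mallows_reflection n \<rho> r) = r"
  by (simp add: mallows_reflection_def fun_eq_iff permutes_inverses[OF \<rho>_permutes])

lemma mallows_weight_reflection:
  assumes "r \<in> rankings n"
  shows "mallows_weight n \<rho> \<alpha> (mallows_reflection n \<rho> r) = mallows_weight n \<rho> \<alpha> r"
proof -
  define \<pi> where "\<pi> = inv \<rho> \<circ> rank_reversal n \<circ> \<rho>"
  have \<pi>: "\<pi> permutes {1..n}" unfolding \<pi>_def
    by (intro permutes_compose permutes_inv \<rho>_permutes rank_reversal_permutes)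
  have \<rho>_fixed: "rank_reversal n \<circ> \<rho> \<circ> \<pi> = \<rho>"
    by (simp add: \<pi>_def fun_eq_iff permutes_inverses[OF \<rho>_permutes])
  have "r permutes {1..n}" using assms by (simp add: rankings_def)
  then have images: "r ` {1..n} \<subseteq> {1..n}" "\<rho> ` {1..n} \<subseteq> {1..n}"
    using permutes_image permutes_image[OF \<rho>_permutes] by blast+
  have "footrule n (mallows_reflection n \<rho> r) \<rho>
      = footrule n ((rank_reversal n \<circ> r) \<circ> \<pi>) ((rank_reversal n \<circ> \<rho>) \<circ> \<pi>)"
    by (simp add: mallows_reflection_def \<pi>_def[symmetric] \<rho>_fixed o_assoc)
  also have "\<dots> = footrule n r \<rho>"
    by (simp add: footrule_reindex[OF \<pi>] footrule_rank_reversal[OF images])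
  finally show ?thesis by (simp add: mallows_weight_def)
qed

end

theorem mainTheorem3:
  fixes n m :: nat and \<rho>0 :: "nat \<Rightarrow> nat" and \<alpha> :: real and om :: nat and k :: nat
  assumes "m \<ge> 1" and "n = 2 * m - 1"
    and "\<rho>0 \<in> rankings n"
    and "\<alpha> > 0"
    and "om \<in> {1..n}" and "\<rho>0 om = m"
    and "k \<in> {1..m - 1}"
  shows "mallows_prob n \<rho>0 \<alpha> (\<lambda>r. r om = m - k) = mallows_prob n \<rho>0 \<alpha> (\<lambda>r. r om = m + k)"
proof (rule mallows_prob_eq_by_involution[where \<Phi> = "mallows_reflection n \<rho>0"])
  have "rank_reversal n (\<rho>0 om) = \<rho>0 om"
    using assms(1,2,6) by (simp add: rank_reversal_def)
  moreover have "inv \<rho>0 (\<rho>0 om) = om"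
    using assms(3) unfolding rankings_def mem_Collect_eq by (rule permutes_inverses(2))
  ultimately have "inv \<rho>0 (rank_reversal n (\<rho>0 om)) = om" by simp
  then have reflection_om: "mallows_reflection n \<rho>0 r om = rank_reversal n (r om)" for r
    by (simp add: mallows_reflection_apply)
  have "rank_reversal n (m + k) = m - k"
    using assms(2,7) by (auto simp: rank_reversal_def)
  then show "mallows_reflection n \<rho>0 r om = m + k \<longleftrightarrow> r om = m - k" for r
    by (metis reflection_om rank_reversal_involution)
qed (simp_all add: assms(3) mallows_reflection_rankings mallows_reflection_involution
       mallows_weight_reflection)

end
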